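(* In the category $\mathrm{Vect}$ of vector spaces over a field and linear maps, the (surjective, injective) = (epi, mono) factorisation system is costable, i.e. monomorphisms are stable under pushout. Moreover, the assignment that is the identity on objects and sends an epi-mono corelation $U\xrightarrow{f}A\xleftarrow{g}V$ to the linear subspace $\ker[f\ \ -g]\subseteq U\oplus V$ is a full, faithful, bijective-on-objects functor $\mathrm{Corel}_{(\mathrm{Epi},\mathrm{Mono})}(\mathrm{Vect})\to\mathrm{LinRel}$; in particular these categories are isomorphic.
   Context: A factorisation system is costable if its right class is stable under pushout. For a factorisation system $(\mathcal E,\mathcal M)$ on a category with finite colimits, $\mathrm{Corel}_{(\mathcal E,\mathcal M)}$ has morphisms isomorphism classes of cospans $X\xrightarrow{i}N\xleftarrow{o}Y$ with $[i,o]\colon X+Y\to N$ in $\mathcal E$, composed by forming the pushout composite cospan $X\to N+_YM\leftarrow Z$ and then replacing the apex by the image $\overline{N+_YM}$ of the copairing $X+Z\to N+_YM$ (i.e. taking the $\mathcal E$ factor of its $(\mathcal E,\mathcal M)$-factorisation). $\mathrm{LinRel}$ is the category of vector spaces and linear relations $L\subseteq U\oplus V$, composed as relations: $(u,w)\in L;L'$ iff there is $v$ with $(u,v)\in L$, $(v,w)\in L'$. *)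

theory Defs
  imports Main
begin

text \<open>The field of scalars is a type 'k of class field (every field is, up to
isomorphism, of this form).\<close>

record ('k, 'a) vs =
  vcarrier :: "'a set"
  vadd :: "'a \<Rightarrow> 'a \<Rightarrow> 'a"
  vzero :: 'a
  vscale :: "'k \<Rightarrow> 'a \<Rightarrow> 'a"

definition vecspace :: "('k::field, 'a) vs \<Rightarrow> bool" where
  "vecspace V \<longleftrightarrow>
     vzero V \<in> vcarrier V \<and>
     (\<forall>x\<in>vcarrier V. \<forall>y\<in>vcarrier V. vadd V x y \<in> vcarrier V) \<and>
     (\<forall>c. \<forall>x\<in>vcarrier V. vscale V c x \<in> vcarrier V) \<and>
     (\<forall>x\<in>vcarrier V. \<forall>y\<in>vcarrier V. \<forall>z\<in>vcarrier V.
         vadd V (vadd V x y) z = vadd V x (vadd V y z)) \<and>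
     (\<forall>x\<in>vcarrier V. \<forall>y\<in>vcarrier V. vadd V x y = vadd V y x) \<and>
     (\<forall>x\<in>vcarrier V. vadd V (vzero V) x = x) \<and>
     (\<forall>x\<in>vcarrier V. \<exists>y\<in>vcarrier V. vadd V x y = vzero V) \<and>
     (\<forall>c. \<forall>x\<in>vcarrier V. \<forall>y\<in>vcarrier V.
         vscale V c (vadd V x y) = vadd V (vscale V c x) (vscale V c y)) \<and>
     (\<forall>a b. \<forall>x\<in>vcarrier V. vscale V (a + b) x = vadd V (vscale V a x) (vscale V b x)) \<and>
     (\<forall>a b. \<forall>x\<in>vcarrier V. vscale V a (vscale V b x) = vscale V (a * b) x) \<and>
     (\<forall>x\<in>vcarrier V. vscale V 1 x = x)"

text \<open>Linear maps (morphisms of Vect); only their values on the carrier matter.\<close>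
definition linmap :: "('k::field, 'a) vs \<Rightarrow> ('k, 'b) vs \<Rightarrow> ('a \<Rightarrow> 'b) \<Rightarrow> bool" where
  "linmap V W f \<longleftrightarrow>
     (\<forall>x\<in>vcarrier V. f x \<in> vcarrier W) \<and>
     (\<forall>x\<in>vcarrier V. \<forall>y\<in>vcarrier V. f (vadd V x y) = vadd W (f x) (f y)) \<and>
     (\<forall>c. \<forall>x\<in>vcarrier V. f (vscale V c x) = vscale W c (f x))"

definition subspace_of :: "('k::field, 'a) vs \<Rightarrow> 'a set \<Rightarrow> bool" where
  "subspace_of V S \<longleftrightarrow> S \<subseteq> vcarrier V \<and> vzero V \<in> S \<and>
     (\<forall>x\<in>S. \<forall>y\<in>S. vadd V x y \<in> S) \<and> (\<forall>c. \<forall>x\<in>S. vscale V c x \<in> S)"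

definition dsum :: "('k::field, 'a) vs \<Rightarrow> ('k, 'b) vs \<Rightarrow> ('k, 'a \<times> 'b) vs" where
  "dsum V W = \<lparr> vcarrier = vcarrier V \<times> vcarrier W,
      vadd = (\<lambda>(x1, y1) (x2, y2). (vadd V x1 x2, vadd W y1 y2)),
      vzero = (vzero V, vzero W),
      vscale = (\<lambda>c (x, y). (vscale V c x, vscale W c y)) \<rparr>"

definition vcoset :: "('k::field, 'a) vs \<Rightarrow> 'a set \<Rightarrow> 'a \<Rightarrow> 'a set" where
  "vcoset V S a = (\<lambda>s. vadd V a s) ` S"

definition quot :: "('k::field, 'a) vs \<Rightarrow> 'a set \<Rightarrow> ('k, 'a set) vs" where
  "quot V S = \<lparr> vcarrier = vcoset V S ` vcarrier V,
      vadd = (\<lambda>A B. vcoset V S (vadd V (SOME a. a \<in> A) (SOME b. b \<in> B))),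
      vzero = vcoset V S (vzero V),
      vscale = (\<lambda>c A. vcoset V S (vscale V c (SOME a. a \<in> A))) \<rparr>"

definition po_ker :: "('k::field, 'y) vs \<Rightarrow> ('k, 'n) vs \<Rightarrow> ('k, 'm) vs \<Rightarrow>
    ('y \<Rightarrow> 'n) \<Rightarrow> ('y \<Rightarrow> 'm) \<Rightarrow> ('n \<times> 'm) set" where
  "po_ker Y N M f g = {(f y, vscale M (-1) (g y)) | y. y \<in> vcarrier Y}"

definition pushout_sp :: "('k::field, 'y) vs \<Rightarrow> ('k, 'n) vs \<Rightarrow> ('k, 'm) vs \<Rightarrow>
    ('y \<Rightarrow> 'n) \<Rightarrow> ('y \<Rightarrow> 'm) \<Rightarrow> ('k, ('n \<times> 'm) set) vs" where
  "pushout_sp Y N M f g = quot (dsum N M) (po_ker Y N M f g)"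

definition po_inl :: "('k::field, 'y) vs \<Rightarrow> ('k, 'n) vs \<Rightarrow> ('k, 'm) vs \<Rightarrow>
    ('y \<Rightarrow> 'n) \<Rightarrow> ('y \<Rightarrow> 'm) \<Rightarrow> 'n \<Rightarrow> ('n \<times> 'm) set" where
  "po_inl Y N M f g n = vcoset (dsum N M) (po_ker Y N M f g) (n, vzero M)"

definition po_inr :: "('k::field, 'y) vs \<Rightarrow> ('k, 'n) vs \<Rightarrow> ('k, 'm) vs \<Rightarrow>
    ('y \<Rightarrow> 'n) \<Rightarrow> ('y \<Rightarrow> 'm) \<Rightarrow> 'm \<Rightarrow> ('n \<times> 'm) set" where
  "po_inr Y N M f g m = vcoset (dsum N M) (po_ker Y N M f g) (vzero N, m)"

text \<open>It is an (Epi,Mono)-corelation iff the copairing [i,j] : U \<oplus> V \<rightarrow> A is surjective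
(epimorphisms in Vect are the surjective linear maps).\<close>
type_synonym ('k, 'u, 'v, 'a) cospan = "('k, 'a) vs \<times> ('u \<Rightarrow> 'a) \<times> ('v \<Rightarrow> 'a)"

definition epi_corel :: "('k::field, 'u) vs \<Rightarrow> ('k, 'v) vs \<Rightarrow> ('k, 'u, 'v, 'a) cospan \<Rightarrow> bool" where
  "epi_corel U V c = (case c of (A, i, j) \<Rightarrow>
     vecspace A \<and> linmap U A i \<and> linmap V A j \<and>
     (\<forall>a\<in>vcarrier A. \<exists>u\<in>vcarrier U. \<exists>v\<in>vcarrier V. a = vadd A (i u) (j v)))"

text \<open>Isomorphism of cospans (morphisms of Corel are isomorphism classes).\<close>
definition cospan_iso :: "('k::field, 'u) vs \<Rightarrow> ('k, 'v) vs \<Rightarrow>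
    ('k, 'u, 'v, 'a) cospan \<Rightarrow> ('k, 'u, 'v, 'b) cospan \<Rightarrow> bool" where
  "cospan_iso U V c d = (case c of (A, i, j) \<Rightarrow> case d of (B, j', p) \<Rightarrow>
     (\<exists>\<phi>. linmap A B \<phi> \<and> bij_betw \<phi> (vcarrier A) (vcarrier B) \<and>
          (\<forall>u\<in>vcarrier U. \<phi> (i u) = j' u) \<and> (\<forall>v\<in>vcarrier V. \<phi> (j v) = p v)))"

definition corel_id :: "('k::field, 'x) vs \<Rightarrow> ('k, 'x, 'x, 'x) cospan" where
  "corel_id X = (X, id, id)"

text \<open>Composition in Corel: form the pushout composite cospan X \<rightarrow> N +_Y M \<leftarrow> Z, then
replace the apex by the image of the copairing X \<oplus> Z \<rightarrow> N +_Y M.\<close>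
definition corel_comp :: "('k::field, 'x) vs \<Rightarrow> ('k, 'y) vs \<Rightarrow> ('k, 'z) vs \<Rightarrow>
    ('k, 'x, 'y, 'a) cospan \<Rightarrow> ('k, 'y, 'z, 'b) cospan \<Rightarrow> ('k, 'x, 'z, ('a \<times> 'b) set) cospan" where
  "corel_comp X Y Z c1 c2 = (case c1 of (N, i, j) \<Rightarrow> case c2 of (M, i', j') \<Rightarrow>
     (let P = pushout_sp Y N M j i';
          l = po_inl Y N M j i';
          r = po_inr Y N M j i';
          I = {vadd P (l (i x)) (r (j' z)) | x z. x \<in> vcarrier X \<and> z \<in> vcarrier Z}
      in (P\<lparr>vcarrier := I\<rparr>, l \<circ> i, r \<circ> j')))"

text \<open>A linear relation U \<rightarrow> V is a linear subspace of U \<oplus> V; composition is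
relational composition (O), the identity is the diagonal.\<close>
definition linrel :: "('k::field, 'u) vs \<Rightarrow> ('k, 'v) vs \<Rightarrow> ('u \<times> 'v) set \<Rightarrow> bool" where
  "linrel U V L \<longleftrightarrow> subspace_of (dsum U V) L"

definition corel_rel :: "('k::field, 'u) vs \<Rightarrow> ('k, 'v) vs \<Rightarrow> ('k, 'u, 'v, 'a) cospan \<Rightarrow> ('u \<times> 'v) set" where
  "corel_rel U V c = (case c of (A, f, g) \<Rightarrow>
     {(u, v). (u, v) \<in> vcarrier (dsum U V) \<and> vadd A (f u) (vscale A (-1) (g v)) = vzero A})"

end

theory Submission
  imports Defs
begin

text \<open>
  A pushout N +_Y M of f : Y \<rightarrow> N and g : Y \<rightarrow> M is (N \<oplus> M)/{(f y, -g y)}, and (0, m) lies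
  in that subspace only if m = -g y with f y = 0; so if f is injective then y = 0 and m = 0.

  For an epi corelation U \<rightarrow> A \<leftarrow> V every element of A is f u + g v, and
  f u1 + g v1 = f u2 + g v2 iff (u1 - u2, v2 - v1) lies in the relation
  {(u, v). f u = g v}. Hence the relation determines A up to an isomorphism
  compatible with the legs (faithfulness), and every linear relation L is realised by
  U \<rightarrow> (U \<oplus> V)/L \<leftarrow> V (fullness). In the pushout of two corelations the images of n and m
  agree iff n = j y and m = i' y for some y, which is relational composition; passing to the
  image of the copairing does not change the relation.
\<close>

locale vector_space_on =
  fixes V :: "('k::field, 'a) vs"
  assumes vecspace: "vecspace V"
begin

abbreviation neg :: "'a \<Rightarrow> 'a" where "neg x \<equiv> vscale V (-1) x"

lemma zero_closed [simp]: "vzero V \<in> vcarrier V"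
  using vecspace unfolding vecspace_def by auto

lemma add_closed [simp]: "x \<in> vcarrier V \<Longrightarrow> y \<in> vcarrier V \<Longrightarrow> vadd V x y \<in> vcarrier V"
  using vecspace unfolding vecspace_def by auto

lemma scale_closed [simp]: "x \<in> vcarrier V \<Longrightarrow> vscale V c x \<in> vcarrier V"
  using vecspace unfolding vecspace_def by auto

lemma add_assoc: "x \<in> vcarrier V \<Longrightarrow> y \<in> vcarrier V \<Longrightarrow> z \<in> vcarrier V \<Longrightarrow>
    vadd V (vadd V x y) z = vadd V x (vadd V y z)"
  using vecspace unfolding vecspace_def by auto

lemma add_commute: "x \<in> vcarrier V \<Longrightarrow> y \<in> vcarrier V \<Longrightarrow> vadd V x y = vadd V y x"
  using vecspace unfolding vecspace_def by auto

lemma add_zero_left [simp]: "x \<in> vcarrier V \<Longrightarrow> vadd V (vzero V) x = x"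
  using vecspace unfolding vecspace_def by auto

lemma add_inverse_exists: "x \<in> vcarrier V \<Longrightarrow> \<exists>y\<in>vcarrier V. vadd V x y = vzero V"
  using vecspace unfolding vecspace_def by meson

lemma scale_add_right: "x \<in> vcarrier V \<Longrightarrow> y \<in> vcarrier V \<Longrightarrow>
    vscale V c (vadd V x y) = vadd V (vscale V c x) (vscale V c y)"
  using vecspace unfolding vecspace_def by auto

lemma scale_add_left: "x \<in> vcarrier V \<Longrightarrow> vscale V (a + b) x = vadd V (vscale V a x) (vscale V b x)"
  using vecspace unfolding vecspace_def by auto

lemma scale_scale [simp]: "x \<in> vcarrier V \<Longrightarrow> vscale V a (vscale V b x) = vscale V (a * b) x"
  using vecspace unfolding vecspace_def by auto

lemma scale_one [simp]: "x \<in> vcarrier V \<Longrightarrow> vscale V 1 x = x"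
  using vecspace unfolding vecspace_def by auto

lemma add_zero_right [simp]: "x \<in> vcarrier V \<Longrightarrow> vadd V x (vzero V) = x"
  using add_commute[of x "vzero V"] by simp

lemma add_left_commute:
  "x \<in> vcarrier V \<Longrightarrow> y \<in> vcarrier V \<Longrightarrow> z \<in> vcarrier V \<Longrightarrow>
    vadd V x (vadd V y z) = vadd V y (vadd V x z)"
  by (metis add_assoc add_commute)

lemmas add_ac = add_assoc add_commute add_left_commute

lemma add_add_swap:
  assumes "a \<in> vcarrier V" "b \<in> vcarrier V" "c \<in> vcarrier V" "d \<in> vcarrier V"
  shows "vadd V (vadd V a b) (vadd V c d) = vadd V (vadd V a c) (vadd V b d)"
  using assms by (simp add: add_ac)

lemma add_left_cancel:
  assumes "x \<in> vcarrier V" "y \<in> vcarrier V" "z \<in> vcarrier V"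
  shows "vadd V x y = vadd V x z \<longleftrightarrow> y = z"
proof
  assume eq: "vadd V x y = vadd V x z"
  obtain x' where x': "x' \<in> vcarrier V" "vadd V x' x = vzero V"
    using add_inverse_exists assms(1) add_commute by metis
  have "y = vadd V (vadd V x' x) y" using x' assms by simp
  also have "\<dots> = vadd V x' (vadd V x y)" by (rule add_assoc[OF x'(1) assms(1,2)])
  also have "\<dots> = vadd V (vadd V x' x) z" using add_assoc[OF x'(1) assms(1,3)] eq by simp
  also have "\<dots> = z" using x' assms by simp
  finally show "y = z" .
qed simp

lemma scale_zero_left [simp]: "x \<in> vcarrier V \<Longrightarrow> vscale V 0 x = vzero V"
  using scale_add_left[of x 0 0] add_left_cancel[of "vscale V 0 x" "vscale V 0 x" "vzero V"] by simp

lemma scale_zero_right [simp]: "vscale V c (vzero V) = vzero V"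
  using scale_add_right[of "vzero V" "vzero V" c]
    add_left_cancel[of "vscale V c (vzero V)" "vscale V c (vzero V)" "vzero V"] by simp

lemma add_neg [simp]: "x \<in> vcarrier V \<Longrightarrow> vadd V x (neg x) = vzero V"
  using scale_add_left[of x 1 "-1"] by simp

lemma add_neg_eq_zero_iff:
  assumes "x \<in> vcarrier V" "y \<in> vcarrier V"
  shows "vadd V x (neg y) = vzero V \<longleftrightarrow> x = y"
  using add_left_cancel[of "neg y" x y] assms by (simp add: add_commute)

lemma neg_eq_iff: "x \<in> vcarrier V \<Longrightarrow> y \<in> vcarrier V \<Longrightarrow> neg x = y \<longleftrightarrow> x = neg y"
  by auto

lemma neg_add_distrib: "x \<in> vcarrier V \<Longrightarrow> y \<in> vcarrier V \<Longrightarrow> neg (vadd V x y) = vadd V (neg x) (neg y)"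
  by (rule scale_add_right)

lemma neg_diff: "x \<in> vcarrier V \<Longrightarrow> y \<in> vcarrier V \<Longrightarrow> neg (vadd V x (neg y)) = vadd V y (neg x)"
  by (simp add: neg_add_distrib add_commute)

lemma add_diff_cancel_left' [simp]:
  "x \<in> vcarrier V \<Longrightarrow> y \<in> vcarrier V \<Longrightarrow> vadd V (vadd V x y) (neg x) = y"
  by (simp add: add_commute[of x y] add_assoc)

lemma add_diff_inverse [simp]:
  "x \<in> vcarrier V \<Longrightarrow> y \<in> vcarrier V \<Longrightarrow> vadd V x (vadd V y (neg x)) = y"
  by (simp add: add_left_commute[of x y])

lemma add_eq_add_iff:
  assumes "x1 \<in> vcarrier V" "y1 \<in> vcarrier V" "x2 \<in> vcarrier V" "y2 \<in> vcarrier V"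
  shows "vadd V x1 y1 = vadd V x2 y2 \<longleftrightarrow> vadd V x1 (neg x2) = vadd V y2 (neg y1)"
proof -
  have "vadd V x1 y1 = vadd V x2 y2 \<longleftrightarrow>
      vadd V (vadd V x1 y1) (vadd V (neg x2) (neg y1)) =
      vadd V (vadd V x2 y2) (vadd V (neg x2) (neg y1))"
    using assms add_left_cancel[of "vadd V (neg x2) (neg y1)"] by (simp add: add_commute)
  also have "vadd V (vadd V x1 y1) (vadd V (neg x2) (neg y1)) = vadd V x1 (neg x2)"
    using assms by (simp add: add_add_swap[of x1 y1])
  also have "vadd V (vadd V x2 y2) (vadd V (neg x2) (neg y1)) = vadd V y2 (neg y1)"
    using assms by (simp add: add_add_swap[of x2 y2])
  finally show ?thesis .
qed

end

lemma linmap_closed: "linmap U W f \<Longrightarrow> x \<in> vcarrier U \<Longrightarrow> f x \<in> vcarrier W"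
  and linmap_add: "linmap U W f \<Longrightarrow> x \<in> vcarrier U \<Longrightarrow> y \<in> vcarrier U \<Longrightarrow>
    f (vadd U x y) = vadd W (f x) (f y)"
  and linmap_scale: "linmap U W f \<Longrightarrow> x \<in> vcarrier U \<Longrightarrow> f (vscale U c x) = vscale W c (f x)"
  unfolding linmap_def by blast+

lemma linmap_zero:
  assumes "vecspace U" "vecspace W" "linmap U W f"
  shows "f (vzero U) = vzero W"
proof -
  interpret U: vector_space_on U by unfold_locales (fact assms(1))
  interpret W: vector_space_on W by unfold_locales (fact assms(2))
  show ?thesis
    using linmap_scale[OF assms(3) U.zero_closed, of 0] linmap_closed[OF assms(3) U.zero_closed]
    by simp
qed

lemma linmap_diff:
  assumes "vecspace U" "linmap U W f" "x \<in> vcarrier U" "y \<in> vcarrier U"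
  shows "f (vadd U x (vscale U (-1) y)) = vadd W (f x) (vscale W (-1) (f y))"
proof -
  interpret U: vector_space_on U by unfold_locales (fact assms(1))
  show ?thesis using assms by (simp add: linmap_add linmap_scale)
qed

lemma linmap_id: "linmap U U id"
  unfolding linmap_def by simp

lemma linmap_comp: "linmap U V f \<Longrightarrow> linmap V W g \<Longrightarrow> linmap U W (g \<circ> f)"
  unfolding linmap_def by simp

lemma dsum_simps [simp]:
  "vcarrier (dsum U W) = vcarrier U \<times> vcarrier W"
  "vadd (dsum U W) (a, b) (c, d) = (vadd U a c, vadd W b d)"
  "vzero (dsum U W) = (vzero U, vzero W)"
  "vscale (dsum U W) k (a, b) = (vscale U k a, vscale W k b)"
  by (simp_all add: dsum_def)

lemma vecspace_dsum:
  assumes "vecspace U" "vecspace W"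
  shows "vecspace (dsum U W)"
proof -
  interpret U: vector_space_on U by unfold_locales (fact assms(1))
  interpret W: vector_space_on W by unfold_locales (fact assms(2))
  have inverse: "\<exists>y\<in>vcarrier (dsum U W). vadd (dsum U W) x y = vzero (dsum U W)"
    if "x \<in> vcarrier (dsum U W)" for x
    using that by (intro bexI[of _ "vscale (dsum U W) (-1) x"]) auto
  show ?thesis
    unfolding vecspace_def
    using inverse
    by (auto simp: U.add_assoc W.add_assoc U.scale_add_right W.scale_add_right
        U.scale_add_left W.scale_add_left intro: U.add_commute W.add_commute)
qed

definition dsum_inl :: "('k::field, 'b) vs \<Rightarrow> 'a \<Rightarrow> 'a \<times> 'b" where
  "dsum_inl W u = (u, vzero W)"

definition dsum_inr :: "('k::field, 'a) vs \<Rightarrow> 'b \<Rightarrow> 'a \<times> 'b" where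
  "dsum_inr U w = (vzero U, w)"

lemma linmap_dsum_inl:
  assumes "vecspace W"
  shows "linmap U (dsum U W) (dsum_inl W)"
proof -
  interpret W: vector_space_on W by unfold_locales (fact assms)
  show ?thesis unfolding linmap_def dsum_inl_def by simp
qed

lemma linmap_dsum_inr:
  assumes "vecspace U"
  shows "linmap W (dsum U W) (dsum_inr U)"
proof -
  interpret U: vector_space_on U by unfold_locales (fact assms)
  show ?thesis unfolding linmap_def dsum_inr_def by simp
qed

lemma linmap_scale_map:
  assumes "vecspace V"
  shows "linmap V V (vscale V c)"
proof -
  interpret V: vector_space_on V by unfold_locales (fact assms)
  show ?thesis unfolding linmap_def by (simp add: V.scale_add_right mult.commute)
qed

lemma vecspace_restrict:
  assumes "vecspace W" "subspace_of W I"
  shows "vecspace (W\<lparr>vcarrier := I\<rparr>)"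
proof -
  interpret W: vector_space_on W by unfold_locales (fact assms(1))
  have "I \<subseteq> vcarrier W" "vzero W \<in> I" "\<And>x y. x \<in> I \<Longrightarrow> y \<in> I \<Longrightarrow> vadd W x y \<in> I"
    "\<And>c x. x \<in> I \<Longrightarrow> vscale W c x \<in> I"
    using assms(2) unfolding subspace_of_def by blast+
  moreover have "\<exists>y\<in>I. vadd W x y = vzero W" if "x \<in> I" for x
    using that calculation by (intro bexI[of _ "W.neg x"]) auto
  ultimately show ?thesis
    unfolding vecspace_def
    by (auto simp: subset_iff W.add_assoc W.scale_add_right W.scale_add_left intro: W.add_commute)
qed

lemma linmap_restrict:
  "linmap U W f \<Longrightarrow> (\<And>x. x \<in> vcarrier U \<Longrightarrow> f x \<in> I) \<Longrightarrow> linmap U (W\<lparr>vcarrier := I\<rparr>) f"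
  unfolding linmap_def by simp

section \<open>Quotient spaces\<close>

context
  fixes V :: "('k::field, 'a) vs" and S :: "'a set"
  assumes vecspace: "vecspace V" and subspace: "subspace_of V S"
begin

interpretation V: vector_space_on V by unfold_locales (fact vecspace)

lemma subspace_subset: "s \<in> S \<Longrightarrow> s \<in> vcarrier V"
  and subspace_zero: "vzero V \<in> S"
  and subspace_add: "s \<in> S \<Longrightarrow> t \<in> S \<Longrightarrow> vadd V s t \<in> S"
  and subspace_scale: "s \<in> S \<Longrightarrow> vscale V c s \<in> S"
  using subspace unfolding subspace_of_def by blast+

lemma coset_self: "a \<in> vcarrier V \<Longrightarrow> a \<in> vcoset V S a"
  unfolding vcoset_def using subspace_zero by (force intro: image_eqI[of _ _ "vzero V"])

lemma coset_add_subspace: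
  assumes a: "a \<in> vcarrier V" and s: "s \<in> S"
  shows "vcoset V S (vadd V a s) = vcoset V S a"
proof -
  have "vcoset V S (vadd V a s) = (\<lambda>t. vadd V a (vadd V s t)) ` S"
    unfolding vcoset_def image_image using a s subspace_subset by (simp add: V.add_assoc)
  also have "(\<lambda>t. vadd V s t) ` S = S"
  proof
    show "(\<lambda>t. vadd V s t) ` S \<subseteq> S" using s subspace_add by blast
    show "S \<subseteq> (\<lambda>t. vadd V s t) ` S"
    proof
      fix t assume t: "t \<in> S"
      have "t = vadd V s (vadd V t (V.neg s))" using s t subspace_subset by simp
      then show "t \<in> (\<lambda>t. vadd V s t) ` S" using s t subspace_add subspace_scale by blast
    qed
  qed
  then have "(\<lambda>t. vadd V a (vadd V s t)) ` S = vcoset V S a"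
    unfolding vcoset_def by (metis image_image)
  finally show ?thesis .
qed

lemma coset_eq_iff:
  assumes "a \<in> vcarrier V" "b \<in> vcarrier V"
  shows "vcoset V S a = vcoset V S b \<longleftrightarrow> vadd V a (V.neg b) \<in> S"
proof
  assume "vcoset V S a = vcoset V S b"
  then obtain s where "s \<in> S" "a = vadd V b s"
    using coset_self[OF assms(1)] unfolding vcoset_def by auto
  then show "vadd V a (V.neg b) \<in> S" using assms subspace_subset by simp
next
  assume "vadd V a (V.neg b) \<in> S"
  then have "vcoset V S (vadd V b (vadd V a (V.neg b))) = vcoset V S b"
    using assms by (intro coset_add_subspace) auto
  then show "vcoset V S a = vcoset V S b" using assms by simp
qed

lemma coset_representative:
  assumes "a \<in> vcarrier V"
  obtains s where "s \<in> S" "(SOME x. x \<in> vcoset V S a) = vadd V a s"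
proof -
  have "(SOME x. x \<in> vcoset V S a) \<in> vcoset V S a" using coset_self[OF assms] by (rule someI)
  then show ?thesis using that unfolding vcoset_def by blast
qed

lemma quot_carrier: "vcarrier (quot V S) = vcoset V S ` vcarrier V"
  and quot_zero: "vzero (quot V S) = vcoset V S (vzero V)"
  by (simp_all add: quot_def)

lemma quot_add:
  assumes a: "a \<in> vcarrier V" and b: "b \<in> vcarrier V"
  shows "vadd (quot V S) (vcoset V S a) (vcoset V S b) = vcoset V S (vadd V a b)"
proof -
  obtain s where s: "s \<in> S" "(SOME x. x \<in> vcoset V S a) = vadd V a s"
    using coset_representative[OF a] .
  obtain t where t: "t \<in> S" "(SOME x. x \<in> vcoset V S b) = vadd V b t"
    using coset_representative[OF b] .
  have "vadd V (vadd V a s) (vadd V b t) = vadd V (vadd V a b) (vadd V s t)"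
    using a b s t subspace_subset by (simp add: V.add_add_swap)
  then show ?thesis
    using s t a b subspace_add by (simp add: quot_def coset_add_subspace)
qed

lemma quot_scale:
  assumes a: "a \<in> vcarrier V"
  shows "vscale (quot V S) c (vcoset V S a) = vcoset V S (vscale V c a)"
proof -
  obtain s where s: "s \<in> S" "(SOME x. x \<in> vcoset V S a) = vadd V a s"
    using coset_representative[OF a] .
  have "vscale V c (vadd V a s) = vadd V (vscale V c a) (vscale V c s)"
    using a s subspace_subset by (simp add: V.scale_add_right)
  then show ?thesis
    using s a subspace_scale by (simp add: quot_def coset_add_subspace)
qed

lemma vecspace_quot: "vecspace (quot V S)"
proof -
  have ball_cosets: "(\<forall>x\<in>vcarrier (quot V S). P x) \<longleftrightarrow> (\<forall>a\<in>vcarrier V. P (vcoset V S a))" for P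
    by (simp add: quot_carrier)
  have "vadd (quot V S) (vcoset V S a) (vcoset V S (V.neg a)) = vzero (quot V S)"
    if "a \<in> vcarrier V" for a
    using that by (simp add: quot_add quot_zero)
  then have inverse:
    "\<forall>x\<in>vcarrier (quot V S). \<exists>y\<in>vcarrier (quot V S). vadd (quot V S) x y = vzero (quot V S)"
    unfolding ball_cosets quot_carrier by (blast intro: V.scale_closed)
  show ?thesis
    unfolding vecspace_def using inverse unfolding ball_cosets
    by (simp add: quot_carrier quot_zero quot_add quot_scale V.add_ac V.scale_add_right
        V.scale_add_left)
qed

lemma linmap_coset: "linmap V (quot V S) (vcoset V S)"
  unfolding linmap_def by (simp add: quot_carrier quot_add quot_scale)

end

section \<open>The linear relation of a corelation\<close>

lemma epi_corelD:
  assumes "epi_corel U V (A, f, g)"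
  shows "vecspace A" "linmap U A f" "linmap V A g"
  using assms unfolding epi_corel_def by simp_all

lemma corel_rel_conv:
  assumes "vecspace A" "linmap U A f" "linmap V A g"
  shows "corel_rel U V (A, f, g) = {(u, v). u \<in> vcarrier U \<and> v \<in> vcarrier V \<and> f u = g v}"
proof -
  interpret A: vector_space_on A by unfold_locales (fact assms(1))
  show ?thesis
    unfolding corel_rel_def using assms(2,3) by (auto simp: A.add_neg_eq_zero_iff linmap_closed)
qed

lemma corel_rel_restrict: "corel_rel U V (A\<lparr>vcarrier := I\<rparr>, f, g) = corel_rel U V (A, f, g)"
  by (simp add: corel_rel_def)

lemma linrel_equalizer:
  assumes "vecspace U" "vecspace V" "vecspace A" "linmap U A f" "linmap V A g"
  shows "linrel U V {(u, v). u \<in> vcarrier U \<and> v \<in> vcarrier V \<and> f u = g v}"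
proof -
  interpret U: vector_space_on U by unfold_locales (fact assms(1))
  interpret V: vector_space_on V by unfold_locales (fact assms(2))
  show ?thesis
    unfolding linrel_def subspace_of_def
    using assms linmap_zero[of U A f] linmap_zero[of V A g]
    by (auto simp: linmap_add linmap_scale)
qed

lemma linrel_corel_rel:
  assumes "vecspace U" "vecspace V" "epi_corel U V c"
  shows "linrel U V (corel_rel U V c)"
proof -
  obtain A f g where c: "c = (A, f, g)" by (cases c)
  with assms(3) have "vecspace A" "linmap U A f" "linmap V A g" by (simp_all add: epi_corelD)
  with assms(1,2) show ?thesis unfolding c by (simp add: corel_rel_conv linrel_equalizer)
qed

lemma subspace_copairing_image:
  assumes "vecspace U" "vecspace V" "vecspace A" and f: "linmap U A f" and g: "linmap V A g"
  shows "subspace_of A {vadd A (f u) (g v) | u v. u \<in> vcarrier U \<and> v \<in> vcarrier V}"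
    (is "subspace_of A ?I")
proof -
  interpret U: vector_space_on U by unfold_locales (fact assms(1))
  interpret V: vector_space_on V by unfold_locales (fact assms(2))
  interpret A: vector_space_on A by unfold_locales (fact assms(3))
  have "vzero A = vadd A (f (vzero U)) (g (vzero V))"
    using linmap_zero[OF assms(1,3) f] linmap_zero[OF assms(2,3) g] by simp
  then have zero: "vzero A \<in> ?I" using U.zero_closed V.zero_closed by blast
  have add: "vadd A a b \<in> ?I" if ab: "a \<in> ?I" "b \<in> ?I" for a b
  proof -
    obtain u v u' v' where "u \<in> vcarrier U" "v \<in> vcarrier V" "a = vadd A (f u) (g v)"
      "u' \<in> vcarrier U" "v' \<in> vcarrier V" "b = vadd A (f u') (g v')" using ab by blast
    then have "vadd A a b = vadd A (f (vadd U u u')) (g (vadd V v v'))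
        \<and> vadd U u u' \<in> vcarrier U \<and> vadd V v v' \<in> vcarrier V"
      using f g by (simp add: linmap_add linmap_closed A.add_add_swap)
    then show ?thesis by blast
  qed
  have scale: "vscale A c a \<in> ?I" if a: "a \<in> ?I" for c a
  proof -
    obtain u v where "u \<in> vcarrier U" "v \<in> vcarrier V" "a = vadd A (f u) (g v)" using a by blast
    then have "vscale A c a = vadd A (f (vscale U c u)) (g (vscale V c v))
        \<and> vscale U c u \<in> vcarrier U \<and> vscale V c v \<in> vcarrier V"
      using f g by (simp add: linmap_scale linmap_closed A.scale_add_right)
    then show ?thesis by blast
  qed
  have "?I \<subseteq> vcarrier A" using f g by (auto simp: linmap_closed)
  then show ?thesis unfolding subspace_of_def using zero add scale by blast
qed

lemma epi_corel_copairing_image: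
  assumes "vecspace U" "vecspace V" "vecspace A" and f: "linmap U A f" and g: "linmap V A g"
  shows "epi_corel U V
    (A\<lparr>vcarrier := {vadd A (f u) (g v) | u v. u \<in> vcarrier U \<and> v \<in> vcarrier V}\<rparr>, f, g)"
    (is "epi_corel U V (A\<lparr>vcarrier := ?I\<rparr>, f, g)")
proof -
  interpret U: vector_space_on U by unfold_locales (fact assms(1))
  interpret V: vector_space_on V by unfold_locales (fact assms(2))
  interpret A: vector_space_on A by unfold_locales (fact assms(3))
  have "f u \<in> ?I" if "u \<in> vcarrier U" for u
  proof -
    have "f u = vadd A (f u) (g (vzero V))"
      using that f linmap_zero[OF assms(2,3) g] by (simp add: linmap_closed)
    then show ?thesis using that V.zero_closed by blast
  qed
  moreover have "g v \<in> ?I" if "v \<in> vcarrier V" for v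
  proof -
    have "g v = vadd A (f (vzero U)) (g v)"
      using that g linmap_zero[OF assms(1,3) f] by (simp add: linmap_closed)
    then show ?thesis using that U.zero_closed by blast
  qed
  ultimately show ?thesis
    unfolding epi_corel_def
    using vecspace_restrict[OF assms(3) subspace_copairing_image[OF assms]] f g
    by (auto simp: linmap_restrict)
qed

section \<open>Faithfulness\<close>

lemma copairing_eq_iff:
  assumes "vecspace U" "vecspace V" "vecspace A" and f: "linmap U A f" and g: "linmap V A g"
    and u: "u1 \<in> vcarrier U" "u2 \<in> vcarrier U" and v: "v1 \<in> vcarrier V" "v2 \<in> vcarrier V"
  shows "vadd A (f u1) (g v1) = vadd A (f u2) (g v2) \<longleftrightarrow>
    f (vadd U u1 (vscale U (-1) u2)) = g (vadd V v2 (vscale V (-1) v1))"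
proof -
  interpret A: vector_space_on A by unfold_locales (fact assms(3))
  show ?thesis
    using A.add_eq_add_iff[of "f u1" "g v1" "f u2" "g v2"] u v f g
    by (simp add: linmap_closed linmap_diff assms(1,2))
qed

locale epi_corel_pair =
  fixes U :: "('k::field, 'u) vs" and V :: "('k, 'v) vs"
    and A :: "('k, 'a) vs" and f :: "'u \<Rightarrow> 'a" and g :: "'v \<Rightarrow> 'a"
    and B :: "('k, 'b) vs" and f' :: "'u \<Rightarrow> 'b" and g' :: "'v \<Rightarrow> 'b"
  assumes vecspace_U: "vecspace U" and vecspace_V: "vecspace V"
    and epi_A: "epi_corel U V (A, f, g)" and epi_B: "epi_corel U V (B, f', g')"
begin

lemma vecspace_A: "vecspace A" and f: "linmap U A f" and g: "linmap V A g"
  and vecspace_B: "vecspace B" and f': "linmap U B f'" and g': "linmap V B g'"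
  using epi_corelD[OF epi_A] epi_corelD[OF epi_B] by simp_all

sublocale U: vector_space_on U by unfold_locales (fact vecspace_U)
sublocale V: vector_space_on V by unfold_locales (fact vecspace_V)
sublocale A: vector_space_on A by unfold_locales (fact vecspace_A)
sublocale B: vector_space_on B by unfold_locales (fact vecspace_B)

lemma copairing_cases_A:
  assumes "a \<in> vcarrier A"
  obtains u v where "u \<in> vcarrier U" "v \<in> vcarrier V" "a = vadd A (f u) (g v)"
  using epi_A assms that unfolding epi_corel_def by blast

lemma copairing_cases_B:
  assumes "b \<in> vcarrier B"
  obtains u v where "u \<in> vcarrier U" "v \<in> vcarrier V" "b = vadd B (f' u) (g' v)"
  using epi_B assms that unfolding epi_corel_def by blast

lemma copairing_eq_transfer:
  assumes rel: "corel_rel U V (A, f, g) \<subseteq> corel_rel U V (B, f', g')"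
    and u: "u1 \<in> vcarrier U" "u2 \<in> vcarrier U" and v: "v1 \<in> vcarrier V" "v2 \<in> vcarrier V"
    and eq: "vadd A (f u1) (g v1) = vadd A (f u2) (g v2)"
  shows "vadd B (f' u1) (g' v1) = vadd B (f' u2) (g' v2)"
proof -
  have "f (vadd U u1 (U.neg u2)) = g (vadd V v2 (V.neg v1))"
    using eq copairing_eq_iff[OF vecspace_U vecspace_V vecspace_A f g u v] by simp
  moreover have "vadd U u1 (U.neg u2) \<in> vcarrier U" "vadd V v2 (V.neg v1) \<in> vcarrier V"
    using u v by simp_all
  ultimately have "f' (vadd U u1 (U.neg u2)) = g' (vadd V v2 (V.neg v1))"
    using rel unfolding corel_rel_conv[OF vecspace_A f g] corel_rel_conv[OF vecspace_B f' g']
    by blast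
  then show ?thesis
    using copairing_eq_iff[OF vecspace_U vecspace_V vecspace_B f' g' u v] by simp
qed

text \<open>By copairing_eq_transfer the choice below does not matter once the relation of the first
  cospan is contained in that of the second.\<close>

definition induced_map :: "'a \<Rightarrow> 'b" where
  "induced_map a = (SOME b. \<exists>u\<in>vcarrier U. \<exists>v\<in>vcarrier V.
     a = vadd A (f u) (g v) \<and> b = vadd B (f' u) (g' v))"

context
  assumes rel: "corel_rel U V (A, f, g) \<subseteq> corel_rel U V (B, f', g')"
begin

lemma induced_map_copairing:
  assumes u: "u \<in> vcarrier U" and v: "v \<in> vcarrier V"
  shows "induced_map (vadd A (f u) (g v)) = vadd B (f' u) (g' v)"
proof -
  let ?P = "\<lambda>b. \<exists>u'\<in>vcarrier U. \<exists>v'\<in>vcarrier V.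
    vadd A (f u) (g v) = vadd A (f u') (g v') \<and> b = vadd B (f' u') (g' v')"
  have "?P (induced_map (vadd A (f u) (g v)))"
    unfolding induced_map_def by (rule someI[of ?P]) (use u v in blast)
  then obtain u' v' where u': "u' \<in> vcarrier U" and v': "v' \<in> vcarrier V"
    and eq: "vadd A (f u) (g v) = vadd A (f u') (g v')"
    and map_eq: "induced_map (vadd A (f u) (g v)) = vadd B (f' u') (g' v')"
    by blast
  show ?thesis using copairing_eq_transfer[OF rel u u' v v' eq] map_eq by simp
qed

lemma induced_map_left_leg: "u \<in> vcarrier U \<Longrightarrow> induced_map (f u) = f' u"
  using induced_map_copairing[of u "vzero V"] linmap_zero[OF vecspace_V vecspace_A g]
    linmap_zero[OF vecspace_V vecspace_B g'] f f' by (simp add: linmap_closed)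

lemma induced_map_right_leg: "v \<in> vcarrier V \<Longrightarrow> induced_map (g v) = g' v"
  using induced_map_copairing[of "vzero U" v] linmap_zero[OF vecspace_U vecspace_A f]
    linmap_zero[OF vecspace_U vecspace_B f'] g g' by (simp add: linmap_closed)

lemma linmap_induced_map: "linmap A B induced_map"
  unfolding linmap_def
proof (intro conjI ballI allI)
  fix a assume "a \<in> vcarrier A"
  then obtain u v where "u \<in> vcarrier U" "v \<in> vcarrier V" "a = vadd A (f u) (g v)"
    by (rule copairing_cases_A)
  then show "induced_map a \<in> vcarrier B"
    using f' g' by (simp add: induced_map_copairing linmap_closed)
next
  fix a b assume a: "a \<in> vcarrier A" and b: "b \<in> vcarrier A"
  obtain u v where uv: "u \<in> vcarrier U" "v \<in> vcarrier V" "a = vadd A (f u) (g v)"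
    using a by (rule copairing_cases_A)
  obtain u' v' where uv': "u' \<in> vcarrier U" "v' \<in> vcarrier V" "b = vadd A (f u') (g v')"
    using b by (rule copairing_cases_A)
  have "vadd A a b = vadd A (f (vadd U u u')) (g (vadd V v v'))"
    using uv uv' f g by (simp add: linmap_add linmap_closed A.add_add_swap)
  then show "induced_map (vadd A a b) = vadd B (induced_map a) (induced_map b)"
    using uv uv' f' g' by (simp add: induced_map_copairing linmap_add linmap_closed B.add_add_swap)
next
  fix c a assume "a \<in> vcarrier A"
  then obtain u v where uv: "u \<in> vcarrier U" "v \<in> vcarrier V" "a = vadd A (f u) (g v)"
    by (rule copairing_cases_A)
  then have "vscale A c a = vadd A (f (vscale U c u)) (g (vscale V c v))"
    using f g by (simp add: linmap_scale linmap_closed A.scale_add_right)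
  then show "induced_map (vscale A c a) = vscale B c (induced_map a)"
    using uv f' g' by (simp add: induced_map_copairing linmap_scale linmap_closed B.scale_add_right)
qed

end

lemma bij_betw_induced_map:
  assumes rel: "corel_rel U V (A, f, g) = corel_rel U V (B, f', g')"
  shows "bij_betw induced_map (vcarrier A) (vcarrier B)"
proof (rule bij_betw_imageI)
  interpret BA: epi_corel_pair U V B f' g' A f g
    by unfold_locales (fact vecspace_U vecspace_V epi_B epi_A)+
  note map_copairing = induced_map_copairing[OF equalityD1[OF rel]]
  show "inj_on induced_map (vcarrier A)"
  proof (rule inj_onI)
    fix a b
    assume a: "a \<in> vcarrier A" and b: "b \<in> vcarrier A" and eq: "induced_map a = induced_map b"
    obtain u v where uv: "u \<in> vcarrier U" "v \<in> vcarrier V" "a = vadd A (f u) (g v)"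
      using a by (rule copairing_cases_A)
    obtain u' v' where uv': "u' \<in> vcarrier U" "v' \<in> vcarrier V" "b = vadd A (f u') (g v')"
      using b by (rule copairing_cases_A)
    have "vadd B (f' u) (g' v) = vadd B (f' u') (g' v')"
      using eq uv uv' by (simp add: map_copairing)
    then show "a = b"
      unfolding uv(3) uv'(3)
      by (rule BA.copairing_eq_transfer[OF equalityD2[OF rel] uv(1) uv'(1) uv(2) uv'(2)])
  qed
  show "induced_map ` vcarrier A = vcarrier B"
  proof
    show "induced_map ` vcarrier A \<subseteq> vcarrier B"
      using linmap_induced_map[OF equalityD1[OF rel]] by (auto simp: linmap_closed)
    show "vcarrier B \<subseteq> induced_map ` vcarrier A"
    proof
      fix b assume "b \<in> vcarrier B"
      then obtain u v where "u \<in> vcarrier U" "v \<in> vcarrier V" "b = vadd B (f' u) (g' v)"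
        by (rule copairing_cases_B)
      then show "b \<in> induced_map ` vcarrier A"
        using f g
        by (auto simp: map_copairing linmap_closed intro!: image_eqI[of _ _ "vadd A (f u) (g v)"])
    qed
  qed
qed

lemma corel_rel_eq_iff_cospan_iso:
  "corel_rel U V (A, f, g) = corel_rel U V (B, f', g') \<longleftrightarrow> cospan_iso U V (A, f, g) (B, f', g')"
proof
  assume rel: "corel_rel U V (A, f, g) = corel_rel U V (B, f', g')"
  then have sub: "corel_rel U V (A, f, g) \<subseteq> corel_rel U V (B, f', g')" by simp
  show "cospan_iso U V (A, f, g) (B, f', g')"
    unfolding cospan_iso_def prod.case
    using linmap_induced_map[OF sub] bij_betw_induced_map[OF rel]
      induced_map_left_leg[OF sub] induced_map_right_leg[OF sub]
    by blast
next
  assume "cospan_iso U V (A, f, g) (B, f', g')"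
  then obtain \<phi> where bij: "bij_betw \<phi> (vcarrier A) (vcarrier B)"
    and \<phi>f: "\<forall>u\<in>vcarrier U. \<phi> (f u) = f' u" and \<phi>g: "\<forall>v\<in>vcarrier V. \<phi> (g v) = g' v"
    unfolding cospan_iso_def prod.case by blast
  have "f u = g v \<longleftrightarrow> f' u = g' v" if u: "u \<in> vcarrier U" and v: "v \<in> vcarrier V" for u v
  proof -
    have "f u = g v \<longleftrightarrow> \<phi> (f u) = \<phi> (g v)"
      using inj_on_eq_iff[OF bij_betw_imp_inj_on[OF bij]] u v f g by (simp add: linmap_closed)
    then show ?thesis using u v \<phi>f \<phi>g by simp
  qed
  then show "corel_rel U V (A, f, g) = corel_rel U V (B, f', g')"
    unfolding corel_rel_conv[OF vecspace_A f g] corel_rel_conv[OF vecspace_B f' g'] by blast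
qed

end

lemma epi_corel_rel_eq_iff_cospan_iso:
  assumes "vecspace U" "vecspace V" "epi_corel U V c" "epi_corel U V d"
  shows "corel_rel U V c = corel_rel U V d \<longleftrightarrow> cospan_iso U V c d"
proof -
  obtain A f g B f' g' where "c = (A, f, g)" "d = (B, f', g')" by (cases c, cases d)
  with assms interpret epi_corel_pair U V A f g B f' g' by unfold_locales simp_all
  show ?thesis using corel_rel_eq_iff_cospan_iso \<open>c = (A, f, g)\<close> \<open>d = (B, f', g')\<close> by simp
qed

section \<open>Identities and fullness\<close>

lemma epi_corel_id:
  assumes "vecspace X"
  shows "epi_corel X X (corel_id X)"
proof -
  interpret X: vector_space_on X by unfold_locales (fact assms)
  have "\<exists>u\<in>vcarrier X. \<exists>v\<in>vcarrier X. a = vadd X u v" if "a \<in> vcarrier X" for a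
    using that X.zero_closed X.add_zero_right[OF that] by metis
  then show ?thesis unfolding epi_corel_def corel_id_def using assms linmap_id by simp
qed

lemma corel_rel_id: "vecspace X \<Longrightarrow> corel_rel X X (corel_id X) = Id_on (vcarrier X)"
  unfolding corel_id_def by (auto simp: corel_rel_conv linmap_id Id_on_def)

text \<open>The right leg is v \<mapsto> [(0, -v)], so that [(u, 0)] = [(0, -v)] iff (u, v) \<in> L.\<close>

definition rel_corel :: "('k::field, 'u) vs \<Rightarrow> ('k, 'v) vs \<Rightarrow> ('u \<times> 'v) set \<Rightarrow>
    ('k, 'u, 'v, ('u \<times> 'v) set) cospan" where
  "rel_corel U V L = (quot (dsum U V) L, vcoset (dsum U V) L \<circ> dsum_inl V,
     vcoset (dsum U V) L \<circ> dsum_inr U \<circ> vscale V (-1))"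

context
  fixes U :: "('k::field, 'u) vs" and V :: "('k, 'v) vs" and L :: "('u \<times> 'v) set"
  assumes vecspace_U: "vecspace U" and vecspace_V: "vecspace V" and linrel: "linrel U V L"
begin

interpretation U: vector_space_on U by unfold_locales (fact vecspace_U)
interpretation V: vector_space_on V by unfold_locales (fact vecspace_V)

lemma linmap_rel_corel_legs:
  "linmap U (quot (dsum U V) L) (vcoset (dsum U V) L \<circ> dsum_inl V)"
  "linmap V (quot (dsum U V) L) (vcoset (dsum U V) L \<circ> dsum_inr U \<circ> vscale V (-1))"
  using linmap_coset[OF vecspace_dsum[OF vecspace_U vecspace_V] linrel[unfolded linrel_def]]
    linmap_dsum_inl[OF vecspace_V] linmap_dsum_inr[OF vecspace_U] linmap_scale_map[OF vecspace_V]
  by (blast intro: linmap_comp)+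

lemma epi_corel_rel_corel: "epi_corel U V (rel_corel U V L)"
proof -
  note D = vecspace_dsum[OF vecspace_U vecspace_V] and S = linrel[unfolded linrel_def]
  have "\<exists>u\<in>vcarrier U. \<exists>v\<in>vcarrier V. a = vadd (quot (dsum U V) L)
      ((vcoset (dsum U V) L \<circ> dsum_inl V) u) ((vcoset (dsum U V) L \<circ> dsum_inr U \<circ> vscale V (-1)) v)"
    if a: "a \<in> vcarrier (quot (dsum U V) L)" for a
  proof -
    obtain u v where uv: "u \<in> vcarrier U" "v \<in> vcarrier V" "a = vcoset (dsum U V) L (u, v)"
      using a by (auto simp: quot_carrier[OF D S])
    then have "a = vadd (quot (dsum U V) L) (vcoset (dsum U V) L (u, vzero V))
        (vcoset (dsum U V) L (vzero U, V.neg (V.neg v)))"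
      by (simp add: quot_add[OF D S])
    then show ?thesis
      using uv by (intro bexI[of _ u] bexI[of _ "V.neg v"]) (auto simp: dsum_inl_def dsum_inr_def)
  qed
  then show ?thesis
    unfolding epi_corel_def rel_corel_def prod.case
    using vecspace_quot[OF D S] linmap_rel_corel_legs by blast
qed

lemma corel_rel_rel_corel: "corel_rel U V (rel_corel U V L) = L"
proof -
  note D = vecspace_dsum[OF vecspace_U vecspace_V] and S = linrel[unfolded linrel_def]
  have "vcoset (dsum U V) L (u, vzero V) = vcoset (dsum U V) L (vzero U, V.neg v) \<longleftrightarrow> (u, v) \<in> L"
    if "u \<in> vcarrier U" "v \<in> vcarrier V" for u v
    using that by (simp add: coset_eq_iff[OF D S])
  moreover have "L \<subseteq> vcarrier U \<times> vcarrier V" using S by (simp add: subspace_of_def)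
  ultimately show ?thesis
    unfolding rel_corel_def corel_rel_conv[OF vecspace_quot[OF D S] linmap_rel_corel_legs]
    by (auto simp: dsum_inl_def dsum_inr_def)
qed

end

section \<open>Pushouts and composition\<close>

context
  fixes Y :: "('k::field, 'y) vs" and N :: "('k, 'n) vs" and M :: "('k, 'm) vs"
    and f :: "'y \<Rightarrow> 'n" and g :: "'y \<Rightarrow> 'm"
  assumes vecspace_Y: "vecspace Y" and vecspace_N: "vecspace N" and vecspace_M: "vecspace M"
    and f: "linmap Y N f" and g: "linmap Y M g"
begin

interpretation Y: vector_space_on Y by unfold_locales (fact vecspace_Y)
interpretation N: vector_space_on N by unfold_locales (fact vecspace_N)
interpretation M: vector_space_on M by unfold_locales (fact vecspace_M)

lemma subspace_po_ker: "subspace_of (dsum N M) (po_ker Y N M f g)"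
  unfolding subspace_of_def
proof (intro conjI ballI allI subsetI)
  have "vzero (dsum N M) = (f (vzero Y), M.neg (g (vzero Y)))"
    using linmap_zero[OF vecspace_Y vecspace_N f] linmap_zero[OF vecspace_Y vecspace_M g] by simp
  then show "vzero (dsum N M) \<in> po_ker Y N M f g" unfolding po_ker_def using Y.zero_closed by blast
next
  fix a b assume "a \<in> po_ker Y N M f g" "b \<in> po_ker Y N M f g"
  then obtain y y' where "y \<in> vcarrier Y" "a = (f y, M.neg (g y))"
    "y' \<in> vcarrier Y" "b = (f y', M.neg (g y'))" unfolding po_ker_def by blast
  then have "vadd (dsum N M) a b = (f (vadd Y y y'), M.neg (g (vadd Y y y')))
      \<and> vadd Y y y' \<in> vcarrier Y"
    using f g by (simp add: linmap_add linmap_closed M.scale_add_right)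
  then show "vadd (dsum N M) a b \<in> po_ker Y N M f g" unfolding po_ker_def by blast
next
  fix c a assume "a \<in> po_ker Y N M f g"
  then obtain y where "y \<in> vcarrier Y" "a = (f y, M.neg (g y))" unfolding po_ker_def by blast
  then have "vscale (dsum N M) c a = (f (vscale Y c y), M.neg (g (vscale Y c y)))
      \<and> vscale Y c y \<in> vcarrier Y"
    using f g by (simp add: linmap_scale linmap_closed mult.commute)
  then show "vscale (dsum N M) c a \<in> po_ker Y N M f g" unfolding po_ker_def by blast
next
  fix a assume "a \<in> po_ker Y N M f g"
  then show "a \<in> vcarrier (dsum N M)" unfolding po_ker_def using f g by (auto simp: linmap_closed)
qed

lemma vecspace_pushout_sp: "vecspace (pushout_sp Y N M f g)"
  unfolding pushout_sp_def
  by (rule vecspace_quot[OF vecspace_dsum[OF vecspace_N vecspace_M] subspace_po_ker])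

lemma linmap_po_inl: "linmap N (pushout_sp Y N M f g) (po_inl Y N M f g)"
proof -
  have "po_inl Y N M f g = vcoset (dsum N M) (po_ker Y N M f g) \<circ> dsum_inl M"
    by (auto simp: po_inl_def dsum_inl_def)
  then show ?thesis
    unfolding pushout_sp_def
    using linmap_comp[OF linmap_dsum_inl[OF vecspace_M]
        linmap_coset[OF vecspace_dsum[OF vecspace_N vecspace_M] subspace_po_ker]]
    by simp
qed

lemma linmap_po_inr: "linmap M (pushout_sp Y N M f g) (po_inr Y N M f g)"
proof -
  have "po_inr Y N M f g = vcoset (dsum N M) (po_ker Y N M f g) \<circ> dsum_inr N"
    by (auto simp: po_inr_def dsum_inr_def)
  then show ?thesis
    unfolding pushout_sp_def
    using linmap_comp[OF linmap_dsum_inr[OF vecspace_N]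
        linmap_coset[OF vecspace_dsum[OF vecspace_N vecspace_M] subspace_po_ker]]
    by simp
qed

lemma po_coset_eq_iff:
  assumes n: "n1 \<in> vcarrier N" "n2 \<in> vcarrier N" and m: "m1 \<in> vcarrier M" "m2 \<in> vcarrier M"
  shows "vcoset (dsum N M) (po_ker Y N M f g) (n1, m1) =
      vcoset (dsum N M) (po_ker Y N M f g) (n2, m2)
    \<longleftrightarrow> (\<exists>y\<in>vcarrier Y. f y = vadd N n1 (N.neg n2) \<and> g y = vadd M m2 (M.neg m1))"
proof -
  have "vcoset (dsum N M) (po_ker Y N M f g) (n1, m1) =
      vcoset (dsum N M) (po_ker Y N M f g) (n2, m2)
    \<longleftrightarrow> vadd (dsum N M) (n1, m1) (vscale (dsum N M) (-1) (n2, m2)) \<in> po_ker Y N M f g"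
    using n m
    by (intro coset_eq_iff[OF vecspace_dsum[OF vecspace_N vecspace_M] subspace_po_ker]) simp_all
  also have "\<dots> \<longleftrightarrow> (\<exists>y\<in>vcarrier Y. f y = vadd N n1 (N.neg n2) \<and> M.neg (g y) = vadd M m1 (M.neg m2))"
    unfolding po_ker_def by (simp add: Bex_def) metis
  also have "\<dots> \<longleftrightarrow> (\<exists>y\<in>vcarrier Y. f y = vadd N n1 (N.neg n2) \<and> g y = vadd M m2 (M.neg m1))"
    using m g by (simp add: M.neg_eq_iff M.neg_diff linmap_closed cong: bex_cong)
  finally show ?thesis .
qed

lemma po_inl_eq_po_inr_iff:
  assumes "n \<in> vcarrier N" "m \<in> vcarrier M"
  shows "po_inl Y N M f g n = po_inr Y N M f g m \<longleftrightarrow> (\<exists>y\<in>vcarrier Y. f y = n \<and> g y = m)"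
  unfolding po_inl_def po_inr_def using assms by (simp add: po_coset_eq_iff)

lemma inj_on_po_inr:
  assumes inj: "inj_on f (vcarrier Y)"
  shows "inj_on (po_inr Y N M f g) (vcarrier M)"
proof (rule inj_onI)
  fix m1 m2 assume m: "m1 \<in> vcarrier M" "m2 \<in> vcarrier M"
    and "po_inr Y N M f g m1 = po_inr Y N M f g m2"
  then obtain y where y: "y \<in> vcarrier Y" "f y = vzero N" and gy: "g y = vadd M m2 (M.neg m1)"
    unfolding po_inr_def by (auto simp: po_coset_eq_iff)
  have "y = vzero Y"
    using inj_onD[OF inj] y linmap_zero[OF vecspace_Y vecspace_N f] Y.zero_closed by metis
  then have "vadd M m2 (M.neg m1) = vzero M"
    using gy linmap_zero[OF vecspace_Y vecspace_M g] by simp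
  then show "m1 = m2" using m by (simp add: M.add_neg_eq_zero_iff)
qed

end

lemma corel_comp_conv:
  "corel_comp X Y Z (N, i, j) (M, i', j') =
    (let P = pushout_sp Y N M j i'; l = po_inl Y N M j i' \<circ> i; r = po_inr Y N M j i' \<circ> j'
     in (P\<lparr>vcarrier := {vadd P (l x) (r z) | x z. x \<in> vcarrier X \<and> z \<in> vcarrier Z}\<rparr>, l, r))"
  by (simp add: corel_comp_def Let_def)

context
  fixes X :: "('k::field, 'x) vs" and Y :: "('k, 'y) vs" and Z :: "('k, 'z) vs"
    and N :: "('k, 'n) vs" and i :: "'x \<Rightarrow> 'n" and j :: "'y \<Rightarrow> 'n"
    and M :: "('k, 'm) vs" and i' :: "'y \<Rightarrow> 'm" and j' :: "'z \<Rightarrow> 'm"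
  assumes vecspaces: "vecspace X" "vecspace Y" "vecspace Z" "vecspace N" "vecspace M"
    and i: "linmap X N i" and j: "linmap Y N j" and i': "linmap Y M i'" and j': "linmap Z M j'"
begin

lemma linmap_comp_legs:
  "linmap X (pushout_sp Y N M j i') (po_inl Y N M j i' \<circ> i)"
  "linmap Z (pushout_sp Y N M j i') (po_inr Y N M j i' \<circ> j')"
  using linmap_comp[OF i linmap_po_inl] linmap_comp[OF j' linmap_po_inr] vecspaces j i' by auto

lemma epi_corel_comp: "epi_corel X Z (corel_comp X Y Z (N, i, j) (M, i', j'))"
  unfolding corel_comp_conv Let_def
  by (rule epi_corel_copairing_image[OF vecspaces(1,3) vecspace_pushout_sp[OF vecspaces(2,4,5) j i']
        linmap_comp_legs])

lemma corel_rel_comp: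
  "corel_rel X Z (corel_comp X Y Z (N, i, j) (M, i', j')) =
    corel_rel X Y (N, i, j) O corel_rel Y Z (M, i', j')"
proof -
  have legs_eq_iff:
    "x \<in> vcarrier X \<and> z \<in> vcarrier Z \<and> po_inl Y N M j i' (i x) = po_inr Y N M j i' (j' z)
      \<longleftrightarrow> x \<in> vcarrier X \<and> z \<in> vcarrier Z \<and> (\<exists>y\<in>vcarrier Y. j y = i x \<and> i' y = j' z)" for x z
    using po_inl_eq_po_inr_iff[OF vecspaces(2,4,5) j i' linmap_closed[OF i] linmap_closed[OF j']]
    by blast
  show ?thesis
    unfolding corel_comp_conv Let_def corel_rel_restrict
      corel_rel_conv[OF vecspace_pushout_sp[OF vecspaces(2,4,5) j i'] linmap_comp_legs]
      corel_rel_conv[OF vecspaces(4) i j] corel_rel_conv[OF vecspaces(5) i' j']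
    by (auto simp only: comp_apply legs_eq_iff)
qed

end

context
  fixes X :: "('k::field, 'x) vs" and Y :: "('k, 'y) vs" and Z :: "('k, 'z) vs"
    and c1 :: "('k, 'x, 'y, 'a) cospan" and c2 :: "('k, 'y, 'z, 'b) cospan"
  assumes vecspaces: "vecspace X" "vecspace Y" "vecspace Z"
    and epi: "epi_corel X Y c1" "epi_corel Y Z c2"
begin

lemma epi_corel_corel_comp: "epi_corel X Z (corel_comp X Y Z c1 c2)"
proof -
  obtain N i j M i' j' where c: "c1 = (N, i, j)" "c2 = (M, i', j')" by (cases c1, cases c2)
  show ?thesis
    using epi unfolding c by (intro epi_corel_comp vecspaces) (simp_all add: epi_corelD)
qed

lemma corel_rel_corel_comp:
  "corel_rel X Z (corel_comp X Y Z c1 c2) = corel_rel X Y c1 O corel_rel Y Z c2"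
proof -
  obtain N i j M i' j' where c: "c1 = (N, i, j)" "c2 = (M, i', j')" by (cases c1, cases c2)
  show ?thesis
    using epi unfolding c by (intro corel_rel_comp vecspaces) (simp_all add: epi_corelD)
qed

end

theorem mainTheorem14:
  shows
  "(\<forall>(Y :: ('k::field, 'y) vs) (N :: ('k, 'n) vs) (M :: ('k, 'm) vs) f g.
       vecspace Y \<and> vecspace N \<and> vecspace M \<and> linmap Y N f \<and> linmap Y M g \<and>
       inj_on f (vcarrier Y)
       \<longrightarrow> inj_on (po_inr Y N M f g) (vcarrier M))
   \<and>
   (\<forall>(U :: ('k, 'u) vs) (V :: ('k, 'v) vs) (c :: ('k, 'u, 'v, 'a) cospan).
       vecspace U \<and> vecspace V \<and> epi_corel U V c \<longrightarrow> linrel U V (corel_rel U V c))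
   \<and>
   (\<forall>(U :: ('k, 'u) vs) (V :: ('k, 'v) vs) (c :: ('k, 'u, 'v, 'a) cospan) (d :: ('k, 'u, 'v, 'b) cospan).
       vecspace U \<and> vecspace V \<and> epi_corel U V c \<and> epi_corel U V d
       \<longrightarrow> (corel_rel U V c = corel_rel U V d \<longleftrightarrow> cospan_iso U V c d))
   \<and>
   (\<forall>(U :: ('k, 'u) vs) (V :: ('k, 'v) vs) L.
       vecspace U \<and> vecspace V \<and> linrel U V L
       \<longrightarrow> (\<exists>c :: ('k, 'u, 'v, ('u \<times> 'v) set) cospan. epi_corel U V c \<and> corel_rel U V c = L))
   \<and>
   (\<forall>X :: ('k, 'x) vs. vecspace X
       \<longrightarrow> epi_corel X X (corel_id X) \<and> corel_rel X X (corel_id X) = Id_on (vcarrier X))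
   \<and>
   (\<forall>(X :: ('k, 'x) vs) (Y :: ('k, 'y) vs) (Z :: ('k, 'z) vs)
       (c1 :: ('k, 'x, 'y, 'a) cospan) (c2 :: ('k, 'y, 'z, 'b) cospan).
       vecspace X \<and> vecspace Y \<and> vecspace Z \<and> epi_corel X Y c1 \<and> epi_corel Y Z c2
       \<longrightarrow> epi_corel X Z (corel_comp X Y Z c1 c2) \<and>
           corel_rel X Z (corel_comp X Y Z c1 c2) = corel_rel X Y c1 O corel_rel Y Z c2)"
proof ((intro conjI allI impI; (elim conjE)?), goal_cases)
  case (1 Y N M f g)
  then show ?case by (intro inj_on_po_inr)
next
  case (2 U V c)
  then show ?case by (intro linrel_corel_rel)
next
  case (3 U V c d)
  then show ?case by (intro epi_corel_rel_eq_iff_cospan_iso)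
next
  case (4 U V L)
  then show ?case using epi_corel_rel_corel corel_rel_rel_corel by blast
next
  case (5 X)
  then show ?case by (rule epi_corel_id)
next
  case (6 X)
  then show ?case by (rule corel_rel_id)
next
  case (7 X Y Z c1 c2)
  then show ?case by (intro epi_corel_corel_comp)
next
  case (8 X Y Z c1 c2)
  then show ?case by (intro corel_rel_corel_comp)
qed

end
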